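(* Let $n,s$ be integers with $0\le s\le n$ and let $a,b,d,z\in\mathbb C$ be such that all denominators below are nonzero. Then \begin{gather*} \frac{\big(q,a^2 q;q,p\big)_n}{(aqz, aq/z;q,p)_n}\frac{(bz, b/z;q,p)_s (dz, d/z;q,p)_{n-s}}{(ab, b/a;q,p)_s (ad, d/a;q,p)_{n-s}}\\ =\sum_{k=0}^{n} q^k\frac{\theta(a^2q^{2k};p)}{\theta(a^2;p)}\frac{(a^2,q^{-n},az,a/z,aq/b,aq/d,abq^s,adq^{n-s};q,p)_k}{(q,a^2q^{n+1},aq/z,aqz,ab,ad,aq^{1-s}/b,aq^{1-n+s}/d;q,p)_k}. \end{gather*} (The right-hand side is the very-well-poised series ${}_{12}V_{11}(a^2;q^{-n},az,a/z,aq/b,aq/d,abq^s,adq^{n-s};q,p)$.)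
   Context: Fix complex numbers $q,p$ with $0<|q|<1$, $|p|<1$. The modified Jacobi theta function is $\theta(x;p)=\prod_{j\ge0}(1-p^jx)(1-p^{j+1}/x)$ for $x\neq0$, and $\theta(x_1,\dots,x_r;p)=\prod_i\theta(x_i;p)$. The theta shifted factorial is $(a;q,p)_n=\prod_{k=0}^{n-1}\theta(aq^k;p)$ for $n\ge1$, $(a;q,p)_0=1$, and $(a_1,\dots,a_r;q,p)_n=\prod_i(a_i;q,p)_n$. *)

theory Defs
  imports "HOL-Analysis.Analysis"
begin

definition theta :: "complex \<Rightarrow> complex \<Rightarrow> complex" where
  "theta x p = (\<Prod>j. (1 - p ^ j * x) * (1 - p ^ (j + 1) / x))"

definition tfac :: "complex \<Rightarrow> complex \<Rightarrow> complex \<Rightarrow> nat \<Rightarrow> complex" where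
  "tfac a q p n = (\<Prod>k<n. theta (a * q ^ k) p)"

end

theory Submission
  imports Defs "HOL-Complex_Analysis.Complex_Analysis"
begin

text \<open>
  As functions of \<open>z\<close>, both sides are built from the factors
  \<open>theta_pm x z p = \<theta>(x z\<^sup>\<plusminus>\<^sup>1; p)\<close>. After multiplying numerator and denominator by
  \<open>theta_pm a z p\<close>, the left-hand side is, up to a factor independent of \<open>z\<close>, a quotient of
  \<open>n\<close> such factors (at \<open>b q\<^sup>i\<close> and \<open>d q\<^sup>i\<close>) by \<open>n + 1\<close> such factors (at \<open>a q\<^sup>j\<close>),
  and the right-hand side is its expansion into partial fractions. The expansion follows by
  induction from the case of two nodes, which is Weierstrass' addition formula for theta
  functions. That formula is proved with Liouville's theorem: its defect, divided by
  \<open>theta_pm x u p\<close>, is invariant under \<open>x \<mapsto> p x\<close>, has only removable singularities and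
  vanishes at \<open>x = v\<close>. For nodes in geometric progression the partial fraction coefficients
  evaluate to theta shifted factorials, which gives the very-well-poised series. Parameters for
  which intermediate quantities vanish are reached by continuity, the exceptional sets being
  countable.
\<close>

section \<open>Periodic functions on the punctured plane\<close>

lemma periodic_power_int:
  fixes H :: "complex \<Rightarrow> 'a"
  assumes p: "p \<noteq> 0" and per: "\<And>z. z \<noteq> 0 \<Longrightarrow> H (p * z) = H z" and z: "z \<noteq> 0"
  shows "H (p powi m * z) = H z"
proof (induction m rule: int_induct[where k = 0])
  case base
  then show ?case by simp
next
  case (step1 i)
  have "H (p powi (i + 1) * z) = H (p * (p powi i * z))"
    using p by (simp add: power_int_add_1' mult.assoc)
  also have "\<dots> = H (p powi i * z)"
    using per p z by simp
  finally show ?case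
    using step1 by simp
next
  case (step2 i)
  have "H (p powi i * z) = H (p * (p powi (i - 1) * z))"
    using p power_int_add_1'[of p "i - 1"] by (simp add: mult.assoc)
  also have "\<dots> = H (p powi (i - 1) * z)"
    using per p z by simp
  finally show ?case
    using step2 by simp
qed

lemma ex_power_int_annulus:
  fixes r x :: real
  assumes r: "0 < r" "r < 1" and x: "0 < x"
  obtains m :: int where "r < x * r powi m" "x * r powi m \<le> 1"
proof
  define m where "m = \<lceil>- ln x / ln r\<rceil>"
  have lnr: "ln r < 0"
    using r by simp
  have "- ln x / ln r \<le> m" "m < - ln x / ln r + 1"
    unfolding m_def by linarith+
  then have bounds: "ln r < ln x + m * ln r" "ln x + m * ln r \<le> 0"
    using lnr by (simp_all add: field_simps)
  have eq: "x * r powi m = exp (ln x + m * ln r)"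
    using r x by (simp add: exp_add powr_real_of_int'[symmetric] powr_def)
  show "r < x * r powi m"
    unfolding eq using bounds(1) r by (metis exp_less_cancel_iff exp_ln)
  show "x * r powi m \<le> 1"
    unfolding eq using bounds(2) by simp
qed

lemma periodic_holomorphic_constant:
  fixes H :: "complex \<Rightarrow> complex"
  assumes p: "p \<noteq> 0" "norm p < 1" and H: "H holomorphic_on -{0}"
    and per: "\<And>z. z \<noteq> 0 \<Longrightarrow> H (p * z) = H z" and z: "z \<noteq> 0"
  shows "H z = H 1"
proof -
  define K where "K = cball (0::complex) 1 - ball 0 (norm p)"
  have "compact K" "K \<subseteq> -{0}"
    using p by (auto simp: K_def intro: compact_diff)
  then have "bounded (H ` K)"
    using H by (meson compact_continuous_image compact_imp_bounded continuous_on_subset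
        holomorphic_on_imp_continuous_on)
  then obtain M where M: "\<And>y. y \<in> K \<Longrightarrow> norm (H y) \<le> M"
    by (auto simp: bounded_iff)
  have bound: "norm (H w) \<le> M" if w: "w \<noteq> 0" for w
  proof -
    obtain m :: int where m: "norm p < norm w * norm p powi m" "norm w * norm p powi m \<le> 1"
      using ex_power_int_annulus[of "norm p" "norm w"] p w by auto
    then have "p powi m * w \<in> K"
      by (simp add: K_def norm_mult norm_power_int mult.commute)
    then show ?thesis
      using M periodic_power_int[where H = H, OF p(1) per w] by metis
  qed
  have "(\<lambda>u. H (exp u)) holomorphic_on UNIV"
    by (rule holomorphic_on_compose_gen[OF _ H, unfolded o_def]) (auto intro: holomorphic_intros)
  moreover have "bounded (range (\<lambda>u. H (exp u)))"
    unfolding bounded_iff using bound by (intro exI[of _ M]) auto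
  ultimately have "(\<lambda>u. H (exp u)) constant_on UNIV"
    by (rule Liouville_theorem)
  then obtain c where c: "\<And>u. H (exp u) = c"
    by (auto simp: constant_on_def)
  have "H z = H (exp (Ln z))"
    using z by simp
  also have "\<dots> = H (exp 0)"
    by (simp only: c)
  finally show ?thesis
    by simp
qed

lemma isCont_eq_off_countable:
  fixes f g :: "'a::euclidean_space \<Rightarrow> 'b::real_normed_vector"
  assumes "isCont f a" "isCont g a" "countable C"
    and eq: "eventually (\<lambda>w. w \<notin> C \<longrightarrow> f w = g w) (at a)"
  shows "f a = g a"
proof (rule ccontr)
  assume "f a \<noteq> g a"
  moreover have "((\<lambda>w. f w - g w) \<longlongrightarrow> f a - g a) (at a)"
    using assms(1,2) by (intro tendsto_diff) (auto simp: isCont_def)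
  ultimately have "eventually (\<lambda>w. f w - g w \<noteq> 0) (at a)"
    by (intro tendsto_imp_eventually_ne) auto
  with eq have "eventually (\<lambda>w. w \<in> C) (at a)"
    by eventually_elim auto
  then obtain r where r: "r > 0" "\<And>w. dist w a < r \<Longrightarrow> w \<noteq> a \<Longrightarrow> w \<in> C"
    unfolding eventually_at by auto
  have "ball a r - insert a C = {}"
  proof (intro equalityI subsetI)
    fix x
    assume "x \<in> ball a r - insert a C"
    with r(2)[of x] show "x \<in> {}"
      by (auto simp: dist_commute)
  qed auto
  with ball_minus_countable_nonempty[of "insert a C" r a] \<open>r > 0\<close> assms(3) show False
    by simp
qed

lemma periodic_tendsto_power_int:
  fixes H :: "complex \<Rightarrow> 'a::topological_space"
  assumes p: "p \<noteq> 0" and per: "\<And>z. H (p * z) = H z" and lim: "H \<midarrow>w\<rightarrow> c"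
  shows "H \<midarrow>(p powi m * w)\<rightarrow> c"
proof -
  have "(\<lambda>x. H (p powi (- m) * x)) \<midarrow>(p powi m * w)\<rightarrow> c"
  proof (rule LIM_compose2[OF _ lim])
    show "(\<lambda>x. p powi (- m) * x) \<midarrow>(p powi m * w)\<rightarrow> w"
      using p by (auto intro!: tendsto_eq_intros simp: power_int_minus)
    show "\<exists>d>0. \<forall>x. x \<noteq> p powi m * w \<and> norm (x - p powi m * w) < d \<longrightarrow> p powi (- m) * x \<noteq> w"
      using p by (intro exI[of _ 1]) (auto simp: power_int_minus field_simps)
  qed
  moreover have "H (p powi (- m) * x) = H x" for x
    using periodic_power_int[where H = H, OF p per] by (cases "x = 0") auto
  ultimately show ?thesis
    by simp
qed

lemma tendsto_divide_at_simple_zero: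
  fixes F R K :: "complex \<Rightarrow> complex"
  assumes F: "(F has_field_derivative D) (at w)" "F w = 0"
    and K: "isCont K w" "K w \<noteq> 0"
    and R: "\<And>x. R x = (x - w) * K x"
  shows "(\<lambda>x. F x / R x) \<midarrow>w\<rightarrow> D / K w"
proof -
  have "(\<lambda>x. (F x - F w) / (x - w) / K x) \<midarrow>w\<rightarrow> D / K w"
    using F K by (intro tendsto_divide) (auto simp: has_field_derivative_iff isCont_def)
  moreover have "eventually (\<lambda>x. (F x - F w) / (x - w) / K x = F x / R x) (at w)"
    using eventually_neq_at_within[of w w UNIV] by eventually_elim (simp add: F(2) R)
  ultimately show ?thesis
    by (rule Lim_transform_eventually)
qed

lemma periodic_meromorphic_constant:
  fixes H :: "complex \<Rightarrow> complex"
  assumes p: "p \<noteq> 0" "norm p < 1" and H: "H meromorphic_on -{0}"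
    and per: "\<And>z. H (p * z) = H z"
    and lim: "\<And>z. z \<noteq> 0 \<Longrightarrow> \<exists>c. H \<midarrow>z\<rightarrow> c"
    and z: "z \<noteq> 0" "isCont H z" and w: "w \<noteq> 0" "isCont H w"
  shows "H z = H w"
proof -
  define G where "G = remove_sings H"
  have "G analytic_on {x}" if "x \<noteq> 0" for x
  proof -
    from lim[OF that] obtain c where "H \<midarrow>x\<rightarrow> c" ..
    moreover have "isolated_singularity_at H x"
      using meromorphic_on_subset[OF H, of "{x}"] that
      by (auto intro: meromorphic_on_isolated_singularity)
    ultimately show ?thesis
      unfolding G_def by (intro remove_sings_analytic_at)
  qed
  then have "G analytic_on -{0}"
    using analytic_on_analytic_at by blast
  then have "G holomorphic_on -{0}"
    by (rule analytic_imp_holomorphic)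
  moreover have "G (p * x) = G x" if "x \<noteq> 0" for x
  proof -
    from lim[OF that] obtain c where c: "H \<midarrow>x\<rightarrow> c" ..
    then have "H \<midarrow>(p * x)\<rightarrow> c"
      using periodic_tendsto_power_int[OF p(1) per c, of 1] by simp
    with c show ?thesis
      unfolding G_def by (simp add: remove_sings_eqI)
  qed
  ultimately have "G z = G w"
    using periodic_holomorphic_constant[OF p] z w by metis
  moreover have "G x = H x" if "isCont H x" for x
    using that unfolding G_def by (intro remove_sings_eqI) (simp add: isCont_def)
  ultimately show ?thesis
    using z w by metis
qed

lemma periodic_quotient_eq_0:
  fixes F R :: "complex \<Rightarrow> complex"
  assumes p: "p \<noteq> 0" "norm p < 1"
    and analytic: "F analytic_on -{0}" "R analytic_on -{0}"
    and periodic: "\<And>x. F (p * x) / R (p * x) = F x / R x"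
    and zeros: "\<And>x. x \<noteq> 0 \<Longrightarrow> R x = 0 \<Longrightarrow> \<exists>w\<in>W. \<exists>m::int. x = p powi m * w"
    and lim: "\<And>w. w \<in> W \<Longrightarrow> \<exists>c. (\<lambda>x. F x / R x) \<midarrow>w\<rightarrow> c"
    and countable: "countable {x. R x = 0}"
    and v: "v \<noteq> 0" "R v \<noteq> 0" "F v = 0"
    and x: "x \<noteq> 0"
  shows "F x = 0"
proof -
  define H where "H = (\<lambda>x. F x / R x)"
  have H_periodic: "H (p * y) = H y" for y
    unfolding H_def by (rule periodic)
  have isCont_F: "isCont F y" and isCont_R: "isCont R y" if "y \<noteq> 0" for y
    using that analytic_at_imp_isCont
      analytic_on_subset[OF analytic(1)] analytic_on_subset[OF analytic(2)]
    by auto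
  have isCont_H: "isCont H y" if "y \<noteq> 0" "R y \<noteq> 0" for y
    unfolding H_def using that by (intro continuous_intros isCont_F isCont_R)
  have lim_H: "\<exists>c. H \<midarrow>y\<rightarrow> c" if y: "y \<noteq> 0" for y
  proof (cases "R y = 0")
    case True
    then obtain w m where "w \<in> W" "y = p powi m * w"
      using zeros[OF y] by blast
    with lim show ?thesis
      unfolding H_def using periodic_tendsto_power_int[where H = H, OF p(1) H_periodic] H_def
      by metis
  next
    case False
    then show ?thesis
      using isCont_H[OF y] by (auto simp: isCont_def)
  qed
  have "H meromorphic_on -{0}"
    unfolding H_def by (intro meromorphic_on_divide analytic_on_imp_meromorphic_on analytic)
  then have "H y = H v" if "y \<noteq> 0" "R y \<noteq> 0" for y
    using periodic_meromorphic_constant[OF p _ H_periodic lim_H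
        that(1) isCont_H[OF that] v(1) isCont_H[OF v(1,2)]]
    by blast
  then have "F y = 0" if "y \<notin> {0} \<union> {x. R x = 0}" for y
    using that v by (simp add: H_def)
  moreover have "countable ({0} \<union> {x. R x = 0})"
    using countable by simp
  ultimately show "F x = 0"
    using isCont_eq_off_countable[OF isCont_F[OF x] continuous_const _ always_eventually] by blast
qed

section \<open>The theta function\<close>

definition qpoch_inf :: "complex \<Rightarrow> complex \<Rightarrow> complex" where
  "qpoch_inf x p = (\<Prod>j. 1 - p ^ j * x)"

lemma summable_norm_qpoch_inf_terms:
  fixes p x :: complex
  assumes "norm p < 1"
  shows "summable (\<lambda>j. norm ((1 - p ^ j * x) - 1))"
  using summable_mult[OF summable_geometric[of "norm p"], of "norm x"] assms
  by (simp add: norm_mult norm_power mult.commute)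

lemma qpoch_inf_has_prod:
  assumes "norm p < 1"
  shows "(\<lambda>j. 1 - p ^ j * x) has_prod qpoch_inf x p"
  unfolding qpoch_inf_def
  by (intro convergent_prod_has_prod abs_convergent_prod_imp_convergent_prod
        summable_imp_abs_convergent_prod summable_norm_qpoch_inf_terms assms)

lemma qpoch_inf_shift:
  assumes "norm p < 1"
  shows "qpoch_inf x p = (1 - x) * qpoch_inf (p * x) p"
proof -
  have "(\<lambda>j. 1 - p ^ Suc j * x) has_prod qpoch_inf (p * x) p"
    using qpoch_inf_has_prod[OF assms, of "p * x"] by (simp add: mult_ac)
  then have "(\<lambda>j. 1 - p ^ j * x) has_prod (qpoch_inf (p * x) p * (1 - x))"
    using has_prod_Suc_imp[where f = "\<lambda>j. 1 - p ^ j * x"] by simp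
  then show ?thesis
    using has_prod_unique2[OF qpoch_inf_has_prod[OF assms]] by (simp add: mult.commute)
qed

lemma theta_eq_qpoch_inf:
  assumes "norm p < 1"
  shows "theta x p = qpoch_inf x p * qpoch_inf (p / x) p"
proof -
  have "(\<lambda>j. (1 - p ^ j * x) * (1 - p ^ j * (p / x)))
      has_prod (qpoch_inf x p * qpoch_inf (p / x) p)"
    by (intro has_prod_mult qpoch_inf_has_prod assms)
  also have "(\<lambda>j. (1 - p ^ j * x) * (1 - p ^ j * (p / x)))
      = (\<lambda>j. (1 - p ^ j * x) * (1 - p ^ (j + 1) / x))"
    by (simp add: mult.commute)
  finally show ?thesis
    unfolding theta_def by (rule has_prod_unique[symmetric])
qed

lemma theta_factor:
  assumes "norm p < 1"
  shows "theta x p = (1 - x) * qpoch_inf (p * x) p * qpoch_inf (p / x) p"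
  using assms by (simp add: theta_eq_qpoch_inf qpoch_inf_shift[of p x])

lemma qpoch_inf_eq_0_iff:
  assumes "norm p < 1"
  shows "qpoch_inf x p = 0 \<longleftrightarrow> (\<exists>j. p ^ j * x = 1)"
proof -
  have "0 \<in> range (\<lambda>j. 1 - p ^ j * x) \<longleftrightarrow> (\<exists>j. p ^ j * x = 1)"
    by (metis (no_types, lifting) eq_iff_diff_eq_0 rangeE rangeI)
  then show ?thesis
    using has_prod_eq_0_iff[OF qpoch_inf_has_prod[OF assms]] by simp
qed

lemma qpoch_inf_p_neq_0:
  assumes "norm p < 1"
  shows "qpoch_inf p p \<noteq> 0"
proof
  assume "qpoch_inf p p = 0"
  then obtain j where j: "p ^ j * p = 1"
    using qpoch_inf_eq_0_iff[OF assms] by blast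
  have "norm (p ^ j * p) = norm p ^ Suc j"
    by (simp add: norm_mult norm_power)
  also have "\<dots> < 1"
    using assms by (simp add: power_less_one_iff del: power_Suc)
  finally show False
    using j by simp
qed

lemma theta_1: "norm p < 1 \<Longrightarrow> theta 1 p = 0"
  by (simp add: theta_factor)

lemma theta_inverse:
  assumes "norm p < 1" "x \<noteq> 0"
  shows "theta (1 / x) p = - theta x p / x"
proof -
  have "theta (1 / x) p = qpoch_inf (1 / x) p * qpoch_inf (p * x) p"
    using assms by (simp add: theta_eq_qpoch_inf)
  also have "\<dots> = (1 - 1 / x) * qpoch_inf (p / x) p * qpoch_inf (p * x) p"
    using qpoch_inf_shift[OF assms(1), of "1 / x"] by simp
  also have "\<dots> = - theta x p / x"
    using assms by (simp add: theta_factor field_simps)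
  finally show ?thesis .
qed

lemma theta_mult_p:
  assumes "norm p < 1" "p \<noteq> 0" "x \<noteq> 0"
  shows "theta (p * x) p = - theta x p / x"
proof -
  have "theta (p * x) p = theta (1 / x) p"
    using assms by (simp add: theta_eq_qpoch_inf mult.commute)
  with theta_inverse[OF assms(1,3)] show ?thesis by simp
qed

lemma theta_eq_0_imp:
  assumes "norm p < 1" "theta x p = 0"
  obtains m :: int where "x = p powi m"
proof -
  from assms consider j where "p ^ j * x = 1" | j where "p ^ j * (p / x) = 1"
    by (auto simp: theta_eq_qpoch_inf qpoch_inf_eq_0_iff)
  then show ?thesis
  proof cases
    case 1
    then have "x = p powi (- int j)"
      by (simp add: power_int_minus inverse_unique mult.commute)
    then show ?thesis ..
  next
    case 2
    then have "x = p ^ Suc j"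
      by (cases "x = 0") (auto simp: field_simps)
    then have "x = p powi int (Suc j)"
      by (simp only: power_int_of_nat)
    then show ?thesis ..
  qed
qed

lemma theta_0: "theta x 0 = 1 - x"
  by (simp add: theta_factor qpoch_inf_def)

lemma qpoch_inf_uniform_limit:
  assumes "norm p < 1"
  shows "uniform_limit (cball 0 R) (\<lambda>N x. \<Prod>j<N. 1 - p ^ j * x) (\<lambda>x. qpoch_inf x p) sequentially"
proof -
  have "uniformly_convergent_on (cball 0 R) (\<lambda>N x. \<Prod>j<N. 1 - p ^ j * x)"
  proof (rule uniformly_convergent_on_prod')
    show "uniformly_convergent_on (cball 0 R) (\<lambda>N x. \<Sum>j<N. norm ((1 - p ^ j * x) - 1))"
    proof (rule Weierstrass_m_test')
      fix j x
      assume "x \<in> cball (0::complex) R"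
      then have "norm p ^ j * norm x \<le> norm p ^ j * R"
        by (intro mult_left_mono) auto
      then show "norm (norm ((1 - p ^ j * x) - 1)) \<le> R * norm p ^ j"
        by (simp add: norm_mult norm_power mult.commute)
    next
      show "summable (\<lambda>j. R * norm p ^ j)"
        using assms by (intro summable_mult summable_geometric) auto
    qed
  qed (auto intro!: continuous_intros)
  then obtain g where g: "uniform_limit (cball 0 R) (\<lambda>N x. \<Prod>j<N. 1 - p ^ j * x) g sequentially"
    by (auto simp: uniformly_convergent_on_def)
  also have "?this \<longleftrightarrow>
      uniform_limit (cball 0 R) (\<lambda>N x. \<Prod>j<N. 1 - p ^ j * x) (\<lambda>x. qpoch_inf x p) sequentially"
  proof (rule uniform_limit_cong')
    show "g x = qpoch_inf x p" if "x \<in> cball 0 R" for x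
      using tendsto_uniform_limitI[OF g that] has_prod_imp_tendsto'[OF qpoch_inf_has_prod[OF assms]]
      by (rule LIMSEQ_unique)
  qed auto
  finally show ?thesis .
qed

lemma qpoch_inf_holomorphic:
  assumes "norm p < 1"
  shows "(\<lambda>x. qpoch_inf x p) holomorphic_on A"
proof (rule holomorphic_on_subset)
  show "(\<lambda>x. qpoch_inf x p) holomorphic_on UNIV"
  proof (rule holomorphic_uniform_sequence)
    fix z :: complex
    have "uniform_limit (cball z 1) (\<lambda>N x. \<Prod>j<N. 1 - p ^ j * x) (\<lambda>x. qpoch_inf x p) sequentially"
      by (rule uniform_limit_on_subset[OF qpoch_inf_uniform_limit[OF assms, of "norm z + 1"]])
         (simp add: cball_subset_cball_iff)
    then show "\<exists>d>0. cball z d \<subseteq> UNIV \<and>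
        uniform_limit (cball z d) (\<lambda>N x. \<Prod>j<N. 1 - p ^ j * x) (\<lambda>x. qpoch_inf x p) sequentially"
      by (intro exI[of _ 1]) auto
  qed (auto intro!: holomorphic_intros)
qed auto

lemma analytic_qpoch_inf: "norm p < 1 \<Longrightarrow> (\<lambda>x. qpoch_inf x p) analytic_on A"
  unfolding analytic_on_holomorphic by (intro exI[of _ UNIV]) (simp add: qpoch_inf_holomorphic)

lemma continuous_qpoch_inf [continuous_intros]:
  assumes "norm p < 1" "continuous (at x within S) f"
  shows "continuous (at x within S) (\<lambda>x. qpoch_inf (f x) p)"
proof -
  have "isCont (\<lambda>x. qpoch_inf x p) (f x)"
    by (rule analytic_at_imp_isCont[OF analytic_qpoch_inf[OF assms(1)]])
  from continuous_within_compose3[OF this assms(2)] show ?thesis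
    by (simp add: o_def)
qed

lemma analytic_theta [analytic_intros]:
  assumes "norm p < 1" "f analytic_on A" "\<And>x. x \<in> A \<Longrightarrow> f x \<noteq> 0"
  shows "(\<lambda>x. theta (f x) p) analytic_on A"
proof -
  have "(\<lambda>x. qpoch_inf (f x) p * qpoch_inf (p / f x) p) analytic_on A"
    using assms
    by (intro analytic_intros
        analytic_on_compose_gen[OF _ analytic_qpoch_inf[OF assms(1)], of _ _ UNIV, unfolded o_def])
       auto
  then show ?thesis
    using assms(1) by (simp add: theta_eq_qpoch_inf)
qed

lemma continuous_theta [continuous_intros]:
  assumes "norm p < 1" "continuous (at x within S) f" "f x \<noteq> 0"
  shows "continuous (at x within S) (\<lambda>x. theta (f x) p)"
proof -
  have "(\<lambda>x. theta x p) analytic_on {f x}"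
    using assms by (intro analytic_theta) (auto intro: analytic_intros)
  then have "isCont (\<lambda>x. theta x p) (f x)"
    by (rule analytic_at_imp_isCont)
  from continuous_within_compose3[OF this assms(2)] show ?thesis
    by (simp add: o_def)
qed

section \<open>The addition formula\<close>

definition theta_pm :: "complex \<Rightarrow> complex \<Rightarrow> complex \<Rightarrow> complex" where
  "theta_pm x y p = theta (x * y) p * theta (x / y) p"

lemma theta_pm_mult_p:
  assumes "norm p < 1" "p \<noteq> 0" "x \<noteq> 0" "y \<noteq> 0"
  shows "theta_pm (p * x) y p = theta_pm x y p / x\<^sup>2"
proof -
  have e1: "theta (p * x * y) p = - theta (x * y) p / (x * y)"
    using theta_mult_p[of p "x * y"] assms by (simp add: mult.assoc)
  have e2: "theta (p * x / y) p = - theta (x / y) p / (x / y)"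
    using theta_mult_p[of p "x / y"] assms by simp
  show ?thesis
    unfolding theta_pm_def e1 e2 using assms by (simp add: field_simps power2_eq_square)
qed

lemma theta_pm_inverse_left:
  assumes "norm p < 1" "x \<noteq> 0" "y \<noteq> 0"
  shows "theta_pm (1 / x) y p = theta_pm x y p / x\<^sup>2"
proof -
  have e1: "theta (1 / x * y) p = - theta (x / y) p / (x / y)"
    using theta_inverse[of p "x / y"] assms by simp
  have e2: "theta (1 / x / y) p = - theta (x * y) p / (x * y)"
    using theta_inverse[of p "x * y"] assms by simp
  show ?thesis
    unfolding theta_pm_def e1 e2 using assms by (simp add: field_simps power2_eq_square)
qed

lemma theta_pm_inverse_right: "theta_pm x (1 / y) p = theta_pm x y p"
  by (simp add: theta_pm_def mult.commute)

lemma theta_pm_commute: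
  assumes "norm p < 1" "x \<noteq> 0" "y \<noteq> 0"
  shows "theta_pm y x p = - (y / x) * theta_pm x y p"
proof -
  have "theta (y / x) p = - (y / x) * theta (x / y) p"
    using theta_inverse[of p "x / y"] assms by (simp add: field_simps)
  then show ?thesis
    by (simp add: theta_pm_def mult.commute)
qed

lemma theta_pm_self: "norm p < 1 \<Longrightarrow> x \<noteq> 0 \<Longrightarrow> theta_pm x x p = 0"
  by (simp add: theta_pm_def theta_1)

lemma theta_pm_eq_0_imp:
  assumes "norm p < 1" "y \<noteq> 0" "theta_pm x y p = 0"
  obtains m :: int where "x = y * p powi m \<or> x = p powi m / y"
proof -
  from assms(3) consider "theta (x / y) p = 0" | "theta (x * y) p = 0"
    by (auto simp: theta_pm_def)
  then show ?thesis
  proof cases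
    case 1
    then obtain m where "x / y = p powi m"
      using theta_eq_0_imp[OF assms(1)] by metis
    with assms(2) have "x = y * p powi m"
      by (simp add: field_simps)
    then show ?thesis
      using that by blast
  next
    case 2
    then obtain m where "x * y = p powi m"
      using theta_eq_0_imp[OF assms(1)] by metis
    with assms(2) have "x = p powi m / y"
      by (simp add: field_simps)
    then show ?thesis
      using that by blast
  qed
qed

lemma countable_theta_pm_zeros:
  assumes "norm p < 1" "y \<noteq> 0"
  shows "countable {x. theta_pm x y p = 0}"
proof (rule countable_subset)
  show "{x. theta_pm x y p = 0} \<subseteq> range (\<lambda>m. y * p powi m) \<union> range (\<lambda>m. p powi m / y)"
    using theta_pm_eq_0_imp[OF assms] by blast
qed auto

lemma countable_theta_zeros_square:
  assumes "norm p < 1" "c \<noteq> 0"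
  shows "countable {w. theta (c * w\<^sup>2) p = 0}"
proof (rule countable_subset)
  show "{w. theta (c * w\<^sup>2) p = 0}
      \<subseteq> range (\<lambda>m. csqrt (p powi m / c)) \<union> range (\<lambda>m. - csqrt (p powi m / c))"
  proof
    fix w
    assume "w \<in> {w. theta (c * w\<^sup>2) p = 0}"
    then obtain m where "c * w\<^sup>2 = p powi m"
      using theta_eq_0_imp[OF assms(1)] by blast
    then have "(csqrt (p powi m / c))\<^sup>2 = w\<^sup>2"
      using assms(2) by (simp add: field_simps)
    then have "w = csqrt (p powi m / c) \<or> w = - csqrt (p powi m / c)"
      by (metis power2_eq_iff)
    then show "w \<in> range (\<lambda>m. csqrt (p powi m / c)) \<union> range (\<lambda>m. - csqrt (p powi m / c))"
      by blast
  qed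
qed auto

lemma tendsto_divide_theta_pm_at_zero:
  fixes F :: "complex \<Rightarrow> complex"
  assumes p: "norm p < 1" and w: "w \<noteq> 0" "theta (w * w) p \<noteq> 0"
    and F: "F field_differentiable at w" "F w = 0"
  shows "\<exists>c. (\<lambda>x. F x / theta_pm x w p) \<midarrow>w\<rightarrow> c"
proof -
  define K where
    "K x = - (theta (x * w) p * qpoch_inf (p * (x / w)) p * qpoch_inf (p / (x / w)) p) / w" for x
  have R: "theta_pm x w p = (x - w) * K x" for x
    using w by (simp add: theta_pm_def K_def theta_factor[OF p, of "x / w"] field_simps)
  have K: "isCont K w" "K w \<noteq> 0"
    unfolding K_def using w qpoch_inf_p_neq_0[OF p] by (auto intro!: continuous_intros p)
  obtain D where "(F has_field_derivative D) (at w)"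
    using F(1) by (auto simp: field_differentiable_def)
  from tendsto_divide_at_simple_zero[OF this F(2) K R] show ?thesis ..
qed

lemma theta_addition_generic:
  assumes p: "norm p < 1" "p \<noteq> 0" and nz: "x \<noteq> 0" "y \<noteq> 0" "u \<noteq> 0" "v \<noteq> 0"
    and gen: "theta (u * u) p \<noteq> 0" "theta_pm v u p \<noteq> 0"
  shows "theta_pm x y p * theta_pm u v p - theta_pm x v p * theta_pm u y p
       = u / y * theta_pm y v p * theta_pm x u p"
proof -
  define F where "F x = theta_pm x y p * theta_pm u v p - theta_pm x v p * theta_pm u y p
      - u / y * theta_pm y v p * theta_pm x u p" for x
  have F_analytic: "F analytic_on -{0}" and R_analytic: "(\<lambda>x. theta_pm x u p) analytic_on -{0}"
    unfolding F_def theta_pm_def using nz by (auto intro!: analytic_intros p)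
  have periodic: "F (p * x) / theta_pm (p * x) u p = F x / theta_pm x u p" for x
  proof (cases "x = 0")
    case False
    then have "F (p * x) = F x / x\<^sup>2"
      unfolding F_def using p nz by (simp add: theta_pm_mult_p field_simps)
    with False show ?thesis
      using p nz by (simp add: theta_pm_mult_p)
  qed simp
  have zeros: "\<exists>w\<in>{u, 1 / u}. \<exists>m::int. x = p powi m * w" if "theta_pm x u p = 0" for x
    using theta_pm_eq_0_imp[OF p(1) nz(3) that]
    by (metis insertCI mult.commute times_divide_eq_right mult_1_right)
  have F_zeros: "F u = 0" "F (1 / u) = 0" "F v = 0"
    using p nz by (simp_all add: F_def theta_pm_self theta_pm_inverse_left
        theta_pm_commute[of p y v] theta_pm_commute[of p u v] field_simps)
  have lim: "\<exists>c. (\<lambda>x. F x / theta_pm x u p) \<midarrow>w\<rightarrow> c" if "w \<in> {u, 1 / u}" for w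
  proof -
    have w: "w \<noteq> 0" "F w = 0" "theta (w * w) p \<noteq> 0"
      using that gen(1) theta_inverse[OF p(1), of "u * u"] nz F_zeros by auto
    have diff: "F field_differentiable at w"
      using analytic_on_imp_differentiable_at[OF F_analytic] w by simp
    have "theta_pm x w p = theta_pm x u p" for x
      using that by (auto simp: theta_pm_inverse_right)
    then show ?thesis
      using tendsto_divide_theta_pm_at_zero[OF p(1) w(1,3) diff w(2)] by simp
  qed
  have "F x = 0"
    using periodic_quotient_eq_0[OF p(2,1) F_analytic R_analytic periodic zeros lim
        countable_theta_pm_zeros[OF p(1) nz(3)] nz(4) gen(2) F_zeros(3) nz(1)] by blast
  then show ?thesis
    by (simp add: F_def)
qed

lemma theta_addition:
  assumes p: "norm p < 1" and nz: "x \<noteq> 0" "y \<noteq> 0" "u \<noteq> 0" "v \<noteq> 0"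
  shows "theta_pm x y p * theta_pm u v p - theta_pm x v p * theta_pm u y p
       = u / y * theta_pm y v p * theta_pm x u p"
proof (cases "p = 0")
  case True
  then show ?thesis
    using nz by (simp add: theta_pm_def theta_0 field_simps)
next
  case False
  define C where "C = {0} \<union> {w. theta (w * w) p = 0} \<union> {w. theta_pm w v p = 0}"
  have "countable C"
    unfolding C_def
    using countable_theta_zeros_square[OF p, of 1] countable_theta_pm_zeros[OF p nz(4)]
    by (simp add: power2_eq_square)
  moreover have "theta_pm x y p * theta_pm w v p - theta_pm x v p * theta_pm w y p
      = w / y * theta_pm y v p * theta_pm x w p" if "w \<notin> C" for w
  proof (rule theta_addition_generic[OF p False nz(1,2) _ nz(4)])
    show "w \<noteq> 0" "theta (w * w) p \<noteq> 0"
      using that by (auto simp: C_def)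
    then show "theta_pm v w p \<noteq> 0"
      using that theta_pm_commute[OF p \<open>w \<noteq> 0\<close> nz(4)] nz(4) by (auto simp: C_def)
  qed
  moreover have "isCont (\<lambda>w. theta_pm x y p * theta_pm w v p - theta_pm x v p * theta_pm w y p) u"
    "isCont (\<lambda>w. w / y * theta_pm y v p * theta_pm x w p) u"
    unfolding theta_pm_def using nz by (auto intro!: continuous_intros p)
  ultimately show ?thesis
    using isCont_eq_off_countable[OF _ _ _ always_eventually] by blast
qed

section \<open>Partial fractions\<close>

lemma theta_pm_partial_fractions_2:
  assumes p: "norm p < 1" and nz: "b \<noteq> 0" "z \<noteq> 0" "c \<noteq> 0" "a \<noteq> 0"
    and gen: "theta_pm c a p \<noteq> 0" "theta_pm a z p \<noteq> 0" "theta_pm c z p \<noteq> 0"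
  shows "theta_pm b z p / (theta_pm a z p * theta_pm c z p)
     = theta_pm b a p / theta_pm c a p / theta_pm a z p
       + theta_pm b c p / theta_pm a c p / theta_pm c z p"
proof -
  have "theta_pm b z p * theta_pm c a p - theta_pm b a p * theta_pm c z p
      = c / z * theta_pm z a p * theta_pm b c p"
    by (rule theta_addition[OF p nz])
  then have "a * (theta_pm b z p * theta_pm c a p) + c * (theta_pm a z p * theta_pm b c p)
      = a * (theta_pm b a p * theta_pm c z p)"
    using nz by (simp add: theta_pm_commute[OF p nz(4,2)] field_simps)
  then show ?thesis
    using nz gen by (simp add: theta_pm_commute[OF p nz(3,4)] field_simps)
qed

definition theta_pf_coeff :: "complex \<Rightarrow> (nat \<Rightarrow> complex) \<Rightarrow> (nat \<Rightarrow> complex) \<Rightarrow> nat \<Rightarrow> nat \<Rightarrow> complex"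
  where "theta_pf_coeff p a b n k =
    (\<Prod>i<n. theta_pm (b i) (a k) p) / (\<Prod>j\<in>{..n}-{k}. theta_pm (a j) (a k) p)"

lemma theta_pf_coeff_Suc:
  assumes "k \<le> n"
  shows "theta_pf_coeff p a b (Suc n) k
       = theta_pf_coeff p a b n k * theta_pm (b n) (a k) p / theta_pm (a (Suc n)) (a k) p"
proof -
  have "{..Suc n} - {k} = insert (Suc n) ({..n} - {k})"
    using assms by auto
  then show ?thesis
    unfolding theta_pf_coeff_def by (simp add: field_simps)
qed

lemma theta_pf_coeff_last:
  "theta_pf_coeff p a b (Suc n) (Suc n)
     = (\<Prod>i<n. theta_pm (b i) (a (Suc n)) p) / (\<Prod>j\<le>n. theta_pm (a j) (a (Suc n)) p)
       * theta_pm (b n) (a (Suc n)) p"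
proof -
  have "{..Suc n} - {Suc n} = {..n}"
    by auto
  then show ?thesis
    unfolding theta_pf_coeff_def by (simp add: field_simps)
qed

lemma theta_pm_partial_fractions:
  fixes a b :: "nat \<Rightarrow> complex"
  assumes p: "norm p < 1"
    and a: "\<And>j. j \<le> n \<Longrightarrow> a j \<noteq> 0" and b: "\<And>i. i < n \<Longrightarrow> b i \<noteq> 0"
    and gen_a: "\<And>j k. j \<le> n \<Longrightarrow> k \<le> n \<Longrightarrow> j \<noteq> k \<Longrightarrow> theta_pm (a j) (a k) p \<noteq> 0"
    and z: "z \<noteq> 0" and gen_z: "\<And>j. j \<le> n \<Longrightarrow> theta_pm (a j) z p \<noteq> 0"
  shows "(\<Prod>i<n. theta_pm (b i) z p) / (\<Prod>j\<le>n. theta_pm (a j) z p)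
       = (\<Sum>k\<le>n. theta_pf_coeff p a b n k / theta_pm (a k) z p)"
  using a b gen_a z gen_z
proof (induction n arbitrary: z)
  case 0
  then show ?case
    by (simp add: theta_pf_coeff_def)
next
  case (Suc n)
  let ?c = "theta_pf_coeff p a b"
  define a' where "a' = a (Suc n)"
  have a': "a' \<noteq> 0" "theta_pm a' z p \<noteq> 0"
    using Suc.prems(1,5)[of "Suc n"] by (simp_all add: a'_def)
  have gen: "theta_pm (a k) a' p \<noteq> 0" "theta_pm a' (a k) p \<noteq> 0" if "k \<le> n" for k
    using Suc.prems(3)[of k "Suc n"] Suc.prems(3)[of "Suc n" k] that by (auto simp: a'_def)
  have IH_z: "(\<Prod>i<n. theta_pm (b i) z p) / (\<Prod>j\<le>n. theta_pm (a j) z p)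
      = (\<Sum>k\<le>n. ?c n k / theta_pm (a k) z p)"
    using Suc.prems by (intro Suc.IH) auto
  have IH_a': "(\<Prod>i<n. theta_pm (b i) a' p) / (\<Prod>j\<le>n. theta_pm (a j) a' p)
      = (\<Sum>k\<le>n. ?c n k / theta_pm (a k) a' p)"
    using Suc.prems a' gen by (intro Suc.IH) auto
  have c_Suc: "?c (Suc n) k = ?c n k * theta_pm (b n) (a k) p / theta_pm a' (a k) p"
    if "k \<le> n" for k
    unfolding a'_def using that by (rule theta_pf_coeff_Suc)
  have two_nodes: "theta_pm (b n) z p / (theta_pm (a k) z p * theta_pm a' z p)
      = theta_pm (b n) (a k) p / theta_pm a' (a k) p / theta_pm (a k) z p
        + theta_pm (b n) a' p / theta_pm (a k) a' p / theta_pm a' z p" if "k \<le> n" for k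
    using that Suc.prems gen a'
    by (intro theta_pm_partial_fractions_2[OF p Suc.prems(2)[of n] Suc.prems(4) a'(1)]) auto
  have "(\<Prod>i<Suc n. theta_pm (b i) z p) / (\<Prod>j\<le>Suc n. theta_pm (a j) z p)
      = (\<Prod>i<n. theta_pm (b i) z p) / (\<Prod>j\<le>n. theta_pm (a j) z p)
        * (theta_pm (b n) z p / theta_pm a' z p)"
    by (simp add: a'_def)
  also have "\<dots> = (\<Sum>k\<le>n. ?c n k * (theta_pm (b n) z p / (theta_pm (a k) z p * theta_pm a' z p)))"
    unfolding IH_z sum_distrib_right by (intro sum.cong refl) (simp add: field_simps)
  also have "\<dots> = (\<Sum>k\<le>n. ?c (Suc n) k / theta_pm (a k) z p
      + ?c n k / theta_pm (a k) a' p * (theta_pm (b n) a' p / theta_pm a' z p))"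
    by (intro sum.cong refl) (simp add: two_nodes c_Suc distrib_left)
  also have "\<dots> = (\<Sum>k\<le>n. ?c (Suc n) k / theta_pm (a k) z p)
      + (\<Sum>k\<le>n. ?c n k / theta_pm (a k) a' p) * (theta_pm (b n) a' p / theta_pm a' z p)"
    by (simp only: sum.distrib sum_distrib_right)
  also have "\<dots> = (\<Sum>k\<le>Suc n. ?c (Suc n) k / theta_pm (a k) z p)"
    unfolding IH_a'[symmetric] by (simp add: theta_pf_coeff_last a'_def)
  finally show ?case .
qed

section \<open>Theta shifted factorials\<close>

lemma tfac_0 [simp]: "tfac x q p 0 = 1"
  by (simp add: tfac_def)

lemma tfac_Suc: "tfac x q p (Suc k) = tfac x q p k * theta (x * q ^ k) p"
  by (simp add: tfac_def)

lemma tfac_1: "tfac x q p 1 = theta x p"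
  by (simp add: tfac_def)

lemma tfac_add: "tfac x q p (m + k) = tfac x q p m * tfac (x * q ^ m) q p k"
proof (induction k)
  case (Suc k)
  have "tfac x q p (m + Suc k) = tfac x q p (m + k) * theta (x * q ^ (m + k)) p"
    by (simp add: tfac_Suc)
  also have "x * q ^ (m + k) = x * q ^ m * q ^ k"
    by (simp add: power_add mult.assoc)
  finally show ?case
    using Suc by (simp add: tfac_Suc mult.assoc)
qed simp

lemma tfac_shift: "tfac x q p k * theta (x * q ^ k) p = theta x p * tfac (x * q) q p k"
proof -
  have "tfac x q p (k + 1) = tfac x q p (1 + k)"
    by simp
  then show ?thesis
    unfolding tfac_add tfac_1 by simp
qed

lemma tfac_swap_lengths:
  "tfac x q p s * tfac (x * q ^ s) q p k = tfac x q p k * tfac (x * q ^ k) q p s"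
  by (metis tfac_add add.commute)

lemma tfac_neq_0_iff: "tfac x q p k \<noteq> 0 \<longleftrightarrow> (\<forall>i<k. theta (x * q ^ i) p \<noteq> 0)"
  by (auto simp: tfac_def)

lemma continuous_tfac [continuous_intros]:
  assumes "norm p < 1" "q \<noteq> 0" "continuous (at x within S) f" "f x \<noteq> 0"
  shows "continuous (at x within S) (\<lambda>x. tfac (f x) q p k)"
  unfolding tfac_def using assms by (intro continuous_intros) auto

lemma prod_lessThan_add: "(\<Prod>i<s + m. f i) = (\<Prod>i<s. f i) * (\<Prod>i<m. f (s + i))"
  for f :: "nat \<Rightarrow> 'a::comm_monoid_mult"
  by (induction m) (simp_all add: mult_ac)

lemma prod_atMost_remove:
  fixes f :: "nat \<Rightarrow> 'a::comm_monoid_mult"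
  assumes "k \<le> n"
  shows "(\<Prod>j\<in>{..n}-{k}. f j) = (\<Prod>j<k. f j) * (\<Prod>j<n-k. f (Suc k + j))"
  using assms
proof (induction n rule: dec_induct)
  case base
  have "{..k} - {k} = {..<k}"
    by auto
  then show ?case
    by simp
next
  case (step m)
  have "{..Suc m} - {k} = insert (Suc m) ({..m} - {k})"
    using step.hyps by auto
  moreover have "Suc m - k = Suc (m - k)" "Suc k + (m - k) = Suc m"
    using step.hyps by simp_all
  ultimately show ?case
    using step.IH by (simp add: mult_ac)
qed

lemma prod_theta_pm_geometric:
  "(\<Prod>i<m. theta_pm (c * q ^ i) w p) = tfac (c * w) q p m * tfac (c / w) q p m"
  unfolding theta_pm_def tfac_def prod.distrib[symmetric]
  by (intro prod.cong refl) (simp add: mult_ac)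

lemma tfac_reflect:
  assumes p: "norm p < 1" and c: "c \<noteq> 0" and q: "q \<noteq> 0"
  shows "(\<Prod>i<s. theta (c * q ^ i / q ^ k) p) * tfac (q / (q ^ s * c)) q p k * q ^ (s * k)
       = tfac c q p s * tfac (q / c) q p k"
proof (induction k)
  case (Suc k)
  define f where "f i = theta (c * q ^ i / q ^ Suc k) p" for i
  have shift: "(\<Prod>i<s. theta (c * q ^ i / q ^ k) p) = (\<Prod>i<s. f (Suc i))"
    unfolding f_def using q by (intro prod.cong refl) (simp add: field_simps)
  have telescope: "(\<Prod>i<s. f i) * f s = (\<Prod>i<s. f (Suc i)) * f 0"
    by (induction s) (simp_all add: mult_ac)
  have f_s: "theta (q / (q ^ s * c) * q ^ k) p = - (q ^ Suc k / (q ^ s * c)) * f s"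
  proof -
    have "q / (q ^ s * c) * q ^ k = 1 / (c * q ^ s / q ^ Suc k)"
      using q c by (simp add: field_simps)
    then show ?thesis
      using theta_inverse[OF p, of "c * q ^ s / q ^ Suc k"] q c by (simp add: f_def field_simps)
  qed
  have f_0: "theta (q / c * q ^ k) p = - (q ^ Suc k / c) * f 0"
  proof -
    have "q / c * q ^ k = 1 / (c / q ^ Suc k)"
      using q c by (simp add: field_simps)
    then show ?thesis
      using theta_inverse[OF p, of "c / q ^ Suc k"] q c by (simp add: f_def field_simps)
  qed
  have "(\<Prod>i<s. f i) * tfac (q / (q ^ s * c)) q p (Suc k) * q ^ (s * Suc k)
      = ((\<Prod>i<s. f i) * f s) * tfac (q / (q ^ s * c)) q p k * (- (q ^ Suc k / (q ^ s * c)))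
        * q ^ (s * Suc k)"
    unfolding tfac_Suc f_s by (simp add: mult_ac)
  also have "\<dots> = ((\<Prod>i<s. f (Suc i)) * tfac (q / (q ^ s * c)) q p k * q ^ (s * k))
      * (- (q ^ Suc k / c) * f 0)"
    unfolding telescope using q c
    by (simp add: field_simps power_add power_mult_distrib mult.commute[of s])
  also have "\<dots> = tfac c q p s * tfac (q / c) q p (Suc k)"
    unfolding shift[symmetric] Suc tfac_Suc f_0 by (simp add: mult_ac)
  finally show ?case
    unfolding f_def .
qed (simp add: tfac_def)

lemma prod_theta_inverse_q_powers:
  assumes p: "norm p < 1" and q: "q \<noteq> 0"
  shows "(\<Prod>j<k. theta (q ^ j / q ^ k) p) * (\<Prod>j<k. - (q ^ (j + 1))) = tfac q q p k"
proof (induction k)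
  case (Suc k)
  have "(\<Prod>j<Suc k. theta (q ^ j / q ^ Suc k) p)
      = theta (q ^ 0 / q ^ Suc k) p * (\<Prod>j<k. theta (q ^ Suc j / q ^ Suc k) p)"
    by (rule prod.lessThan_Suc_shift)
  also have "(\<Prod>j<k. theta (q ^ Suc j / q ^ Suc k) p) = (\<Prod>j<k. theta (q ^ j / q ^ k) p)"
    using q by (intro prod.cong refl) simp
  finally have split: "(\<Prod>j<Suc k. theta (q ^ j / q ^ Suc k) p)
      = theta (1 / q ^ Suc k) p * (\<Prod>j<k. theta (q ^ j / q ^ k) p)"
    by simp
  have last: "theta (1 / q ^ Suc k) p * (- (q ^ Suc k)) = theta (q * q ^ k) p"
    using theta_inverse[OF p, of "q ^ Suc k"] q by simp
  have "(\<Prod>j<Suc k. theta (q ^ j / q ^ Suc k) p) * (\<Prod>j<Suc k. - (q ^ (j + 1)))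
      = ((\<Prod>j<k. theta (q ^ j / q ^ k) p) * (\<Prod>j<k. - (q ^ (j + 1))))
        * (theta (1 / q ^ Suc k) p * (- (q ^ Suc k)))"
    unfolding split unfolding prod.lessThan_Suc by (simp only: mult_ac Suc_eq_plus1)
  also have "\<dots> = tfac q q p (Suc k)"
    unfolding Suc last tfac_Suc by simp
  finally show ?case .
qed simp

lemma prod_theta_q_powers_rev:
  assumes "k \<le> n"
  shows "(\<Prod>j<k. theta (q ^ (n - j)) p) * tfac q q p (n - k) = tfac q q p n"
  using assms
proof (induction k)
  case (Suc k)
  have "n - k = Suc (n - Suc k)"
    using Suc.prems by simp
  then show ?case
    using Suc by (simp add: tfac_Suc mult_ac)
qed simp

lemma tfac_inverse_q_power:
  assumes p: "norm p < 1" and q: "q \<noteq> 0" and k: "k \<le> n"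
  shows "(\<Prod>j<k. theta (q ^ j / q ^ k) p) * tfac (inverse (q ^ n)) q p k * q ^ ((n + 1) * k)
         * tfac q q p (n - k) = tfac q q p k * tfac q q p n"
proof -
  have "tfac (inverse (q ^ n)) q p k * (\<Prod>j<k. - (q ^ (n - j))) = (\<Prod>j<k. theta (q ^ (n - j)) p)"
    unfolding tfac_def prod.distrib[symmetric]
  proof (rule prod.cong[OF refl])
    fix j
    assume "j \<in> {..<k}"
    then have "inverse (q ^ n) * q ^ j = 1 / q ^ (n - j)"
      using q k by (simp add: power_diff field_simps)
    then show "theta (inverse (q ^ n) * q ^ j) p * - (q ^ (n - j)) = theta (q ^ (n - j)) p"
      using theta_inverse[OF p, of "q ^ (n - j)"] q by simp
  qed
  moreover have "(\<Prod>j<k. - (q ^ (j + 1))) * (\<Prod>j<k. - (q ^ (n - j))) = q ^ ((n + 1) * k)"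
  proof -
    have "(\<Prod>j<k. - (q ^ (j + 1))) * (\<Prod>j<k. - (q ^ (n - j))) = (\<Prod>j<k. q ^ (n + 1))"
      unfolding prod.distrib[symmetric] using k by (intro prod.cong refl) (simp flip: power_add)
    also have "\<dots> = (q ^ (n + 1)) ^ k"
      by simp
    also have "\<dots> = q ^ ((n + 1) * k)"
      by (rule power_mult[symmetric])
    finally show ?thesis .
  qed
  ultimately show ?thesis
    using prod_theta_inverse_q_powers[OF p q, of k] prod_theta_q_powers_rev[OF k, of q p]
    by (metis (no_types, lifting) mult.assoc mult.commute)
qed

lemma tfac_well_poised_split:
  assumes k: "k \<le> n"
  shows "theta x p * tfac (x * q) q p n * tfac (x * q ^ (n + 1)) q p k
       = tfac x q p k * tfac (x * q ^ k) q p k * theta (x * q ^ (2 * k)) p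
         * tfac (x * q ^ (2 * k + 1)) q p (n - k)"
proof -
  have "tfac x q p (1 + (n + k)) = theta x p * (tfac (x * q) q p n * tfac (x * q * q ^ n) q p k)"
    unfolding tfac_add tfac_1 by simp
  also have "x * q * q ^ n = x * q ^ (n + 1)"
    by (simp add: mult_ac)
  finally have lhs: "tfac x q p (1 + (n + k))
      = theta x p * tfac (x * q) q p n * tfac (x * q ^ (n + 1)) q p k"
    by (simp add: mult_ac)
  have "tfac x q p (k + (k + (1 + (n - k)))) = tfac x q p k * (tfac (x * q ^ k) q p k
      * (theta (x * q ^ k * q ^ k) p * tfac (x * q ^ k * q ^ k * q) q p (n - k)))"
    unfolding tfac_add tfac_1 by simp
  also have "x * q ^ k * q ^ k = x * q ^ (2 * k)"
    by (simp add: mult_2 power_add mult.assoc)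
  also have "x * q ^ (2 * k) * q = x * q ^ (2 * k + 1)"
    by (simp add: mult_ac)
  finally have rhs: "tfac x q p (k + (k + (1 + (n - k))))
      = tfac x q p k * tfac (x * q ^ k) q p k * theta (x * q ^ (2 * k)) p
        * tfac (x * q ^ (2 * k + 1)) q p (n - k)"
    by (simp add: mult_ac)
  have "1 + (n + k) = k + (k + (1 + (n - k)))"
    using k by simp
  then show ?thesis
    using lhs rhs by metis
qed

lemma prod_theta_pm_geometric_shifted:
  assumes p: "norm p < 1" and q: "q \<noteq> 0" and nz: "a \<noteq> 0" "c \<noteq> 0"
  shows "(\<Prod>i<s. theta_pm (c * q ^ i) (a * q ^ k) p) * tfac (a * c) q p k
           * tfac (a * q / (q ^ s * c)) q p k * q ^ (s * k)
       = tfac (a * c) q p s * tfac (a * c * q ^ s) q p k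
         * tfac (c / a) q p s * tfac (a * q / c) q p k"
proof -
  define X where "X = (\<Prod>i<s. theta (c / a * q ^ i / q ^ k) p)"
  have prod: "(\<Prod>i<s. theta_pm (c * q ^ i) (a * q ^ k) p) = tfac (a * c * q ^ k) q p s * X"
    unfolding X_def theta_pm_def tfac_def prod.distrib[symmetric]
    using nz q by (intro prod.cong refl) (simp add: mult_ac)
  have refl: "X * tfac (a * q / (q ^ s * c)) q p k * q ^ (s * k)
      = tfac (c / a) q p s * tfac (a * q / c) q p k"
  proof -
    have e: "q / (q ^ s * (c / a)) = a * q / (q ^ s * c)" "q / (c / a) = a * q / c"
      using nz by (simp_all add: field_simps)
    show ?thesis
      using tfac_reflect[OF p _ q, where c = "c / a" and s = s and k = k] nz
      unfolding X_def e by simp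
  qed
  have "(\<Prod>i<s. theta_pm (c * q ^ i) (a * q ^ k) p) * tfac (a * c) q p k
           * tfac (a * q / (q ^ s * c)) q p k * q ^ (s * k)
      = (tfac (a * c) q p k * tfac (a * c * q ^ k) q p s)
        * (X * tfac (a * q / (q ^ s * c)) q p k * q ^ (s * k))"
    unfolding prod by (simp only: mult_ac)
  also have "\<dots> = tfac (a * c) q p s * tfac (a * c * q ^ s) q p k
      * (tfac (c / a) q p s * tfac (a * q / c) q p k)"
    unfolding refl tfac_swap_lengths[of "a * c" q p s k] ..
  finally show ?thesis
    by (simp only: mult_ac)
qed

lemma prod_theta_pm_geometric_except:
  assumes p: "norm p < 1" and q: "q \<noteq> 0" and a: "a \<noteq> 0" and k: "k \<le> n"
  shows "(\<Prod>j\<in>{..n}-{k}. theta_pm (a * q ^ j) (a * q ^ k) p) * theta (a\<^sup>2 * q ^ (2 * k)) p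
           * tfac (a\<^sup>2) q p k * tfac (inverse (q ^ n)) q p k * q ^ ((n + 1) * k)
       = theta (a\<^sup>2) p * tfac (a\<^sup>2 * q) q p n * tfac (a\<^sup>2 * q ^ (n + 1)) q p k
           * tfac q q p n * tfac q q p k"
proof -
  define Y where "Y = (\<Prod>j<k. theta (q ^ j / q ^ k) p)"
  have low: "(\<Prod>j<k. theta_pm (a * q ^ j) (a * q ^ k) p) = tfac (a\<^sup>2 * q ^ k) q p k * Y"
    unfolding Y_def theta_pm_def tfac_def prod.distrib[symmetric]
    using a q by (intro prod.cong refl) (simp add: mult_ac power2_eq_square)
  have high: "(\<Prod>j<n - k. theta_pm (a * q ^ (Suc k + j)) (a * q ^ k) p)
      = tfac (a\<^sup>2 * q ^ (2 * k + 1)) q p (n - k) * tfac q q p (n - k)"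
    unfolding theta_pm_def tfac_def prod.distrib[symmetric]
  proof (intro prod.cong refl)
    fix j
    have e1: "a * q ^ (Suc k + j) * (a * q ^ k) = a\<^sup>2 * q ^ (2 * k + 1) * q ^ j"
      unfolding mult_2 by (simp add: power_add power2_eq_square mult_ac)
    have e2: "a * q ^ (Suc k + j) / (a * q ^ k) = q * q ^ j"
      using a q by (simp add: power_add field_simps)
    show "theta (a * q ^ (Suc k + j) * (a * q ^ k)) p * theta (a * q ^ (Suc k + j) / (a * q ^ k)) p
        = theta (a\<^sup>2 * q ^ (2 * k + 1) * q ^ j) p * theta (q * q ^ j) p"
      unfolding e1 e2 ..
  qed
  have "(\<Prod>j\<in>{..n}-{k}. theta_pm (a * q ^ j) (a * q ^ k) p) * theta (a\<^sup>2 * q ^ (2 * k)) p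
          * tfac (a\<^sup>2) q p k * tfac (inverse (q ^ n)) q p k * q ^ ((n + 1) * k)
      = (tfac (a\<^sup>2) q p k * tfac (a\<^sup>2 * q ^ k) q p k * theta (a\<^sup>2 * q ^ (2 * k)) p
          * tfac (a\<^sup>2 * q ^ (2 * k + 1)) q p (n - k))
        * (Y * tfac (inverse (q ^ n)) q p k * q ^ ((n + 1) * k) * tfac q q p (n - k))"
    unfolding prod_atMost_remove[OF k] low high by (simp only: mult_ac)
  also have "\<dots> = theta (a\<^sup>2) p * tfac (a\<^sup>2 * q) q p n * tfac (a\<^sup>2 * q ^ (n + 1)) q p k
      * tfac q q p n * tfac q q p k"
    unfolding Y_def tfac_well_poised_split[OF k, symmetric] tfac_inverse_q_power[OF p q k]
    by (simp only: mult_ac)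
  finally show ?thesis .
qed

section \<open>The summation\<close>

definition vwp_product ::
    "complex \<Rightarrow> complex \<Rightarrow> complex \<Rightarrow> complex \<Rightarrow> complex \<Rightarrow> complex \<Rightarrow> nat \<Rightarrow> nat \<Rightarrow> complex"
  where "vwp_product q p a b d z n s =
    tfac q q p n * tfac (a ^ 2 * q) q p n / (tfac (a * q * z) q p n * tfac (a * q / z) q p n)
    * (tfac (b * z) q p s * tfac (b / z) q p s
       * tfac (d * z) q p (n - s) * tfac (d / z) q p (n - s))
    / (tfac (a * b) q p s * tfac (b / a) q p s
       * tfac (a * d) q p (n - s) * tfac (d / a) q p (n - s))"

definition vwp_term_denom ::
    "complex \<Rightarrow> complex \<Rightarrow> complex \<Rightarrow> complex \<Rightarrow> complex \<Rightarrow> complex \<Rightarrow> nat \<Rightarrow> nat \<Rightarrow> nat \<Rightarrow> complex"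
  where "vwp_term_denom q p a b d z n s k =
    tfac q q p k * tfac (a ^ 2 * q ^ (n + 1)) q p k
    * tfac (a * q / z) q p k * tfac (a * q * z) q p k
    * tfac (a * b) q p k * tfac (a * d) q p k
    * tfac (a * q / (q ^ s * b)) q p k * tfac (a * q * q ^ s / (q ^ n * d)) q p k"

definition vwp_term ::
    "complex \<Rightarrow> complex \<Rightarrow> complex \<Rightarrow> complex \<Rightarrow> complex \<Rightarrow> complex \<Rightarrow> nat \<Rightarrow> nat \<Rightarrow> nat \<Rightarrow> complex"
  where "vwp_term q p a b d z n s k =
    q ^ k * theta (a ^ 2 * q ^ (2 * k)) p / theta (a ^ 2) p
    * (tfac (a ^ 2) q p k * tfac (inverse (q ^ n)) q p k * tfac (a * z) q p k * tfac (a / z) q p k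
       * tfac (a * q / b) q p k * tfac (a * q / d) q p k
       * tfac (a * b * q ^ s) q p k * tfac (a * d * q ^ (n - s)) q p k)
    / vwp_term_denom q p a b d z n s k"

lemma partial_fraction_term_eq_vwp_term:
  fixes q p a b d z :: complex and n s k :: nat
  assumes p: "norm p < 1" and q: "q \<noteq> 0" and sn: "s \<le> n" and k: "k \<le> n"
    and nz: "a \<noteq> 0" "b \<noteq> 0" "d \<noteq> 0" "z \<noteq> 0"
    and L: "tfac (a * b) q p s \<noteq> 0" "tfac (b / a) q p s \<noteq> 0"
      "tfac (a * d) q p (n - s) \<noteq> 0" "tfac (d / a) q p (n - s) \<noteq> 0"
    and R: "theta (a\<^sup>2) p \<noteq> 0" "tfac q q p n \<noteq> 0" "tfac (a\<^sup>2 * q) q p n \<noteq> 0"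
    and denom: "vwp_term_denom q p a b d z n s k \<noteq> 0"
    and D: "(\<Prod>j\<in>{..n}-{k}. theta_pm (a * q ^ j) (a * q ^ k) p) \<noteq> 0"
    and Z: "theta_pm (a * q ^ k) z p \<noteq> 0"
  shows "tfac q q p n * tfac (a\<^sup>2 * q) q p n
           / (tfac (a * b) q p s * tfac (b / a) q p s
              * tfac (a * d) q p (n - s) * tfac (d / a) q p (n - s))
         * theta_pm a z p
         * ((\<Prod>i<s. theta_pm (b * q ^ i) (a * q ^ k) p)
            * (\<Prod>i<n - s. theta_pm (d * q ^ i) (a * q ^ k) p))
         / (\<Prod>j\<in>{..n}-{k}. theta_pm (a * q ^ j) (a * q ^ k) p) / theta_pm (a * q ^ k) z p
       = vwp_term q p a b d z n s k"
    (is "?P * ?Za * (?Nb * ?Nd) / ?D / ?Zk = _")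
proof -
  have T: "tfac q q p k \<noteq> 0" "tfac (a\<^sup>2 * q ^ (n + 1)) q p k \<noteq> 0"
      "tfac (a * q / z) q p k \<noteq> 0" "tfac (a * q * z) q p k \<noteq> 0"
      "tfac (a * b) q p k \<noteq> 0" "tfac (a * d) q p k \<noteq> 0"
      "tfac (a * q / (q ^ s * b)) q p k \<noteq> 0" "tfac (a * q * q ^ s / (q ^ n * d)) q p k \<noteq> 0"
    using denom by (auto simp: vwp_term_denom_def)
  have d_shift: "a * q / (q ^ (n - s) * d) = a * q * q ^ s / (q ^ n * d)"
    using q nz sn by (simp add: power_diff field_simps)
  have Nb: "(\<Prod>i<s. theta_pm (b * q ^ i) (a * q ^ k) p)
      = tfac (a * b) q p s * tfac (a * b * q ^ s) q p k
        * tfac (b / a) q p s * tfac (a * q / b) q p k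
        / (tfac (a * b) q p k * tfac (a * q / (q ^ s * b)) q p k * q ^ (s * k))"
    using prod_theta_pm_geometric_shifted[OF p q nz(1,2), where s = s and k = k] T(5,7) q
    by (simp add: field_simps)
  have Nd: "(\<Prod>i<n - s. theta_pm (d * q ^ i) (a * q ^ k) p)
      = tfac (a * d) q p (n - s) * tfac (a * d * q ^ (n - s)) q p k * tfac (d / a) q p (n - s)
          * tfac (a * q / d) q p k
        / (tfac (a * d) q p k * tfac (a * q * q ^ s / (q ^ n * d)) q p k * q ^ ((n - s) * k))"
    using prod_theta_pm_geometric_shifted[OF p q nz(1,3), where s = "n - s" and k = k] T(6,8) q
    unfolding d_shift by (simp add: field_simps)
  have qk: "q ^ ((n + 1) * k) = q ^ k * q ^ (s * k) * q ^ ((n - s) * k)"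
    using sn by (simp flip: power_add add: algebra_simps)
  have Dk: "1 / (\<Prod>j\<in>{..n}-{k}. theta_pm (a * q ^ j) (a * q ^ k) p)
      = theta (a\<^sup>2 * q ^ (2 * k)) p * tfac (a\<^sup>2) q p k * tfac (inverse (q ^ n)) q p k
          * (q ^ k * q ^ (s * k) * q ^ ((n - s) * k))
        / (theta (a\<^sup>2) p * tfac (a\<^sup>2 * q) q p n * tfac (a\<^sup>2 * q ^ (n + 1)) q p k
           * tfac q q p n * tfac q q p k)"
    using prod_theta_pm_geometric_except[OF p q nz(1) k] D R T(1,2)
    unfolding qk by (simp add: field_simps)
  have Zk: "theta_pm a z p / theta_pm (a * q ^ k) z p
      = tfac (a * z) q p k * tfac (a / z) q p k / (tfac (a * q * z) q p k * tfac (a * q / z) q p k)"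
    using tfac_shift[of "a * z" q p k] tfac_shift[of "a / z" q p k] Z T(3,4)
    by (simp add: theta_pm_def field_simps mult_ac)
  have "?P * ?Za * (?Nb * ?Nd) / ?D / ?Zk = ?P * (?Za / ?Zk) * ?Nb * ?Nd * (1 / ?D)"
    by (simp add: divide_inverse mult_ac)
  also have "\<dots> = vwp_term q p a b d z n s k"
    unfolding vwp_term_def vwp_term_denom_def Zk Nb Nd Dk using L R T q by (simp add: field_simps)
  finally show ?thesis .
qed

lemma theta_pm_geometric_neq_0:
  assumes p: "norm p < 1" and q: "q \<noteq> 0" and a: "a \<noteq> 0" and Q: "tfac q q p n \<noteq> 0"
    and A: "\<And>m. m \<le> 2 * n \<Longrightarrow> theta (a\<^sup>2 * q ^ m) p \<noteq> 0"
    and jk: "j \<le> n" "k \<le> n" "j \<noteq> k"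
  shows "theta_pm (a * q ^ j) (a * q ^ k) p \<noteq> 0"
proof -
  have less: "theta_pm (a * q ^ j) (a * q ^ k) p \<noteq> 0" if "k < j" "j \<le> n" for j k
  proof -
    have "a * q ^ j * (a * q ^ k) = a\<^sup>2 * q ^ (j + k)"
      by (simp add: power_add power2_eq_square mult_ac)
    moreover have "a * q ^ j / (a * q ^ k) = q * q ^ (j - k - 1)"
    proof -
      have "j = k + Suc (j - k - 1)"
        using that by simp
      then have "q ^ j = q ^ k * (q * q ^ (j - k - 1))"
        by (metis power_add power_Suc)
      then show ?thesis
        using a q by simp
    qed
    moreover have "theta (q * q ^ (j - k - 1)) p \<noteq> 0"
      using Q that by (auto simp: tfac_neq_0_iff)
    ultimately show ?thesis
      using A[of "j + k"] that by (simp add: theta_pm_def)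
  qed
  show ?thesis
  proof (cases "k < j")
    case False
    then have "theta_pm (a * q ^ k) (a * q ^ j) p \<noteq> 0"
      using less jk by auto
    then show ?thesis
      using theta_pm_commute[OF p, of "a * q ^ k" "a * q ^ j"] a q by auto
  qed (use less jk in auto)
qed

lemma theta_pm_geometric_z_neq_0:
  assumes "theta_pm a z p \<noteq> 0" "tfac (a * q * z) q p n * tfac (a * q / z) q p n \<noteq> 0" "j \<le> n"
  shows "theta_pm (a * q ^ j) z p \<noteq> 0"
proof (cases j)
  case (Suc i)
  then have "i < n"
    using assms(3) by simp
  then have nz: "theta (a * q * z * q ^ i) p \<noteq> 0" "theta (a * q / z * q ^ i) p \<noteq> 0"
    using assms(2) by (auto simp: tfac_neq_0_iff)
  have "a * q * z * q ^ i = a * q ^ j * z" "a * q / z * q ^ i = a * q ^ j / z"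
    using Suc by (simp_all add: mult_ac)
  with nz show ?thesis
    unfolding theta_pm_def by (metis mult_eq_0_iff)
qed (use assms in simp)

lemma vwp_sum_generic:
  fixes q p a b d z :: complex and n s :: nat
  assumes p: "norm p < 1" and q: "q \<noteq> 0" and sn: "s \<le> n"
    and nz: "a \<noteq> 0" "b \<noteq> 0" "d \<noteq> 0" "z \<noteq> 0"
    and L1: "tfac (a * q * z) q p n * tfac (a * q / z) q p n \<noteq> 0"
    and L2: "tfac (a * b) q p s * tfac (b / a) q p s \<noteq> 0"
    and L3: "tfac (a * d) q p (n - s) * tfac (d / a) q p (n - s) \<noteq> 0"
    and R1: "theta (a ^ 2) p \<noteq> 0"
    and R2: "\<forall>k\<le>n. vwp_term_denom q p a b d z n s k \<noteq> 0"
    and gen_z: "theta_pm a z p \<noteq> 0"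
    and gen_a: "\<And>m. m \<le> 2 * n \<Longrightarrow> theta (a ^ 2 * q ^ m) p \<noteq> 0"
  shows "vwp_product q p a b d z n s = (\<Sum>k=0..n. vwp_term q p a b d z n s k)"
proof -
  define c where "c i = (if i < s then b * q ^ i else d * q ^ (i - s))" for i
  define P where "P = tfac q q p n * tfac (a ^ 2 * q) q p n
      / (tfac (a * b) q p s * tfac (b / a) q p s
         * tfac (a * d) q p (n - s) * tfac (d / a) q p (n - s))"
  have Q: "tfac q q p n \<noteq> 0"
    using R2 by (auto simp: vwp_term_denom_def)
  have A: "tfac (a\<^sup>2 * q) q p n \<noteq> 0"
    using gen_a by (auto simp: tfac_neq_0_iff mult.assoc simp flip: power_Suc)
  have gen_aa: "theta_pm (a * q ^ j) (a * q ^ k) p \<noteq> 0" if "j \<le> n" "k \<le> n" "j \<noteq> k" for j k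
    using theta_pm_geometric_neq_0[OF p q nz(1) Q gen_a that] by simp
  have gen_az: "theta_pm (a * q ^ j) z p \<noteq> 0" if "j \<le> n" for j
    using theta_pm_geometric_z_neq_0[OF gen_z L1 that] .
  have num: "(\<Prod>i<n. theta_pm (c i) w p)
      = (\<Prod>i<s. theta_pm (b * q ^ i) w p) * (\<Prod>i<n - s. theta_pm (d * q ^ i) w p)" for w
    using prod_lessThan_add[of "\<lambda>i. theta_pm (c i) w p" s "n - s"] sn by (simp add: c_def)
  have den: "(\<Prod>j\<le>n. theta_pm (a * q ^ j) z p)
      = theta_pm a z p * (tfac (a * q * z) q p n * tfac (a * q / z) q p n)"
    unfolding prod.atMost_shift using prod_theta_pm_geometric[of "a * q" q z p n]
    by (simp add: mult_ac)
  have "vwp_product q p a b d z n s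
      = P * theta_pm a z p * ((\<Prod>i<n. theta_pm (c i) z p) / (\<Prod>j\<le>n. theta_pm (a * q ^ j) z p))"
    unfolding vwp_product_def num den P_def prod_theta_pm_geometric using gen_z L1 L2 L3
    by (simp add: field_simps)
  also have "\<dots> = P * theta_pm a z p
      * (\<Sum>k\<le>n. theta_pf_coeff p (\<lambda>j. a * q ^ j) c n k / theta_pm (a * q ^ k) z p)"
    using nz q
    by (subst theta_pm_partial_fractions[OF p _ _ gen_aa nz(4) gen_az]) (auto simp: c_def)
  also have "\<dots> = (\<Sum>k\<le>n. P * theta_pm a z p
      * (theta_pf_coeff p (\<lambda>j. a * q ^ j) c n k / theta_pm (a * q ^ k) z p))"
    by (rule sum_distrib_left)
  also have "\<dots> = (\<Sum>k=0..n. vwp_term q p a b d z n s k)"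
    unfolding atLeast0AtMost
  proof (intro sum.cong refl)
    fix k
    assume "k \<in> {..n}"
    with gen_aa have "k \<le> n" "(\<Prod>j\<in>{..n}-{k}. theta_pm (a * q ^ j) (a * q ^ k) p) \<noteq> 0"
      by auto
    with R2 L2 L3 show "P * theta_pm a z p
        * (theta_pf_coeff p (\<lambda>j. a * q ^ j) c n k / theta_pm (a * q ^ k) z p)
      = vwp_term q p a b d z n s k"
      unfolding theta_pf_coeff_def num P_def
      using partial_fraction_term_eq_vwp_term[OF p q sn _ nz _ _ _ _ R1 Q A _ _ gen_az]
      by (auto simp: mult.assoc)
  qed
  finally show ?thesis .
qed

lemma vwp_sum:
  fixes q p a b d z :: complex and n s :: nat
  assumes p: "norm p < 1" and q: "q \<noteq> 0" and sn: "s \<le> n"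
    and nz: "a \<noteq> 0" "b \<noteq> 0" "d \<noteq> 0" "z \<noteq> 0"
    and L1: "tfac (a * q * z) q p n * tfac (a * q / z) q p n \<noteq> 0"
    and L2: "tfac (a * b) q p s * tfac (b / a) q p s \<noteq> 0"
    and L3: "tfac (a * d) q p (n - s) * tfac (d / a) q p (n - s) \<noteq> 0"
    and R1: "theta (a ^ 2) p \<noteq> 0"
    and R2: "\<forall>k\<le>n. vwp_term_denom q p a b d z n s k \<noteq> 0"
  shows "vwp_product q p a b d z n s = (\<Sum>k=0..n. vwp_term q p a b d z n s k)"
proof -
  define C where "C = {0} \<union> {w. theta_pm w z p = 0} \<union> (\<Union>m\<le>2 * n. {w. theta (q ^ m * w\<^sup>2) p = 0})"
  have "countable C"
    unfolding C_def using countable_theta_pm_zeros[OF p nz(4)] countable_theta_zeros_square[OF p] q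
    by auto
  define G where "G w = tfac (w * q * z) q p n * tfac (w * q / z) q p n
      * (tfac (w * b) q p s * tfac (b / w) q p s)
      * (tfac (w * d) q p (n - s) * tfac (d / w) q p (n - s))
      * theta (w ^ 2) p * (\<Prod>k\<le>n. vwp_term_denom q p w b d z n s k)" for w
  have "isCont G a" "G a \<noteq> 0"
    unfolding G_def vwp_term_denom_def using nz q L1 L2 L3 R1 R2
    by (auto simp: vwp_term_denom_def intro!: continuous_intros p)
  then have "eventually (\<lambda>w. G w \<noteq> 0) (at a)"
    by (auto simp: isCont_def intro: tendsto_imp_eventually_ne)
  then have "eventually (\<lambda>w. w \<notin> C \<longrightarrow>
      vwp_product q p w b d z n s = (\<Sum>k=0..n. vwp_term q p w b d z n s k)) (at a)"
  proof eventually_elim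
    case (elim w)
    show ?case
    proof
      assume "w \<notin> C"
      then have "w \<noteq> 0" "theta_pm w z p \<noteq> 0" "\<And>m. m \<le> 2 * n \<Longrightarrow> theta (w ^ 2 * q ^ m) p \<noteq> 0"
        by (auto simp: C_def mult.commute)
      with elim show "vwp_product q p w b d z n s = (\<Sum>k=0..n. vwp_term q p w b d z n s k)"
        by (intro vwp_sum_generic[OF p q sn _ nz(2-4)]) (auto simp: G_def)
    qed
  qed
  moreover have "isCont (\<lambda>w. vwp_product q p w b d z n s) a"
    "isCont (\<lambda>w. \<Sum>k=0..n. vwp_term q p w b d z n s k) a"
    unfolding vwp_product_def vwp_term_def vwp_term_denom_def using nz q L1 L2 L3 R1 R2
    by (auto simp: vwp_term_denom_def intro!: continuous_intros p)
  ultimately show ?thesis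
    using isCont_eq_off_countable[OF _ _ \<open>countable C\<close>] by blast
qed

theorem corollary2p7:
  fixes q p a b d z :: complex and n s :: nat
  assumes hq: "0 < norm q" "norm q < 1"
    and hp: "norm p < 1"
    and hs: "s \<le> n"
    and hnz: "a \<noteq> 0" "b \<noteq> 0" "d \<noteq> 0" "z \<noteq> 0"
    and hL1: "tfac (a * q * z) q p n * tfac (a * q / z) q p n \<noteq> 0"
    and hL2: "tfac (a * b) q p s * tfac (b / a) q p s \<noteq> 0"
    and hL3: "tfac (a * d) q p (n - s) * tfac (d / a) q p (n - s) \<noteq> 0"
    and hR1: "theta (a ^ 2) p \<noteq> 0"
    and hR2: "\<forall>k\<le>n. tfac q q p k * tfac (a ^ 2 * q ^ (n + 1)) q p k
               * tfac (a * q / z) q p k * tfac (a * q * z) q p k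
               * tfac (a * b) q p k * tfac (a * d) q p k
               * tfac (a * q / (q ^ s * b)) q p k
               * tfac (a * q * q ^ s / (q ^ n * d)) q p k \<noteq> 0"
  shows "tfac q q p n * tfac (a ^ 2 * q) q p n
           / (tfac (a * q * z) q p n * tfac (a * q / z) q p n)
         * (tfac (b * z) q p s * tfac (b / z) q p s
            * tfac (d * z) q p (n - s) * tfac (d / z) q p (n - s))
         / (tfac (a * b) q p s * tfac (b / a) q p s
            * tfac (a * d) q p (n - s) * tfac (d / a) q p (n - s))
       = (\<Sum>k=0..n. q ^ k * theta (a ^ 2 * q ^ (2 * k)) p / theta (a ^ 2) p
           * (tfac (a ^ 2) q p k * tfac (inverse (q ^ n)) q p k
              * tfac (a * z) q p k * tfac (a / z) q p k
              * tfac (a * q / b) q p k * tfac (a * q / d) q p k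
              * tfac (a * b * q ^ s) q p k * tfac (a * d * q ^ (n - s)) q p k)
           / (tfac q q p k * tfac (a ^ 2 * q ^ (n + 1)) q p k
              * tfac (a * q / z) q p k * tfac (a * q * z) q p k
              * tfac (a * b) q p k * tfac (a * d) q p k
              * tfac (a * q / (q ^ s * b)) q p k
              * tfac (a * q * q ^ s / (q ^ n * d)) q p k))"
proof -
  have "vwp_product q p a b d z n s = (\<Sum>k=0..n. vwp_term q p a b d z n s k)"
    using hq hR2 by (intro vwp_sum[OF hp _ hs hnz hL1 hL2 hL3 hR1]) (auto simp: vwp_term_denom_def)
  then show ?thesis
    by (simp only: vwp_product_def vwp_term_def vwp_term_denom_def)
qed

end
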